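(* Along the boundary curve $x=x_{\rm splg}(h)$, $$\lim_{h\to\infty}\frac{c^*(x_{\rm splg}(h),h)}{x_{\rm splg}(h)}=r,\qquad \lim_{h\to\infty}\pi^*(x_{\rm splg}(h),h)=\frac{(\mu-r)(1-\lambda)^{r_1-1}}{r\beta\sigma^2}.$$
   Context: Parameters $r>0$, $\mu>r$, $\sigma>0$, $\beta>0$, $\lambda\in(0,1)$, $\kappa=(\mu-r)/\sigma$, $r_{1,2}=\frac12(1\pm\sqrt{1+8r/\kappa^2})$. Define $C_6(h):=\frac{(1-\lambda)^{r_1-r_2}}{(r_1-r_2)\beta r}\Big[\frac{1}{1-r_2}e^{(\lambda-1)(1-r_2)\beta h}-\frac{\lambda}{\lambda(1-r_2)-(r_1-r_2)}e^{[\lambda(1-r_2)-(r_1-r_2)]\beta h}\Big]$ and $C_5(h):=\frac{(1-r_2)\kappa^2}{2(r_1-r_2)\beta r^2}[e^{(\lambda-1)(1-r_1)\beta h}-e^{\lambda(1-r_1)\beta h}]$, and $x_{\rm splg}(h):=-r_1C_5(h)(1-\lambda)^{r_1-1}e^{(\lambda-1)(r_1-1)\beta h}-r_2C_6(h)(1-\lambda)^{r_2-1}e^{(\lambda-1)(r_2-1)\beta h}+\frac hr$. On this curve the optimal feedback consumption is $c^*(x_{\rm splg}(h),h)=h$ and the optimal feedback portfolio is $\pi^*(x_{\rm splg}(h),h)=\frac{\mu-r}{\sigma^2}\big[\frac{2r}{\kappa^2}C_5(h)y^{r_1-1}+\frac{2r}{\kappa^2}C_6(h)y^{r_2-1}\big]$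 with $y=(1-\lambda)e^{(\lambda-1)\beta h}$ (these are the optimal controls of the problem $\sup\mathbb E[\int_0^\infty e^{-rt}(-\frac1\beta e^{-\beta(c_t-\lambda H_t)})dt]$ with $H_t$ the running maximum of consumption, wealth $dX=rXdt+\pi(\mu-r)dt+\pi\sigma dW-cdt$). *)

theory Defs
  imports Complex_Main
begin

definition kappa :: "real \<Rightarrow> real \<Rightarrow> real \<Rightarrow> real" where
  "kappa r \<mu> \<sigma> = (\<mu> - r) / \<sigma>"

definition root1 :: "real \<Rightarrow> real \<Rightarrow> real" where
  "root1 r \<kappa> = (1 + sqrt (1 + 8 * r / \<kappa>^2)) / 2"

definition root2 :: "real \<Rightarrow> real \<Rightarrow> real" where
  "root2 r \<kappa> = (1 - sqrt (1 + 8 * r / \<kappa>^2)) / 2"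

definition C6 :: "real \<Rightarrow> real \<Rightarrow> real \<Rightarrow> real \<Rightarrow> real \<Rightarrow> real \<Rightarrow> real" where
  "C6 r \<mu> \<sigma> \<beta> lam h =
    (let \<kappa> = kappa r \<mu> \<sigma>; r1 = root1 r \<kappa>; r2 = root2 r \<kappa> in
     (1 - lam) powr (r1 - r2) / ((r1 - r2) * \<beta> * r) *
     (1 / (1 - r2) * exp ((lam - 1) * (1 - r2) * \<beta> * h)
      - lam / (lam * (1 - r2) - (r1 - r2)) * exp ((lam * (1 - r2) - (r1 - r2)) * \<beta> * h)))"

definition C5 :: "real \<Rightarrow> real \<Rightarrow> real \<Rightarrow> real \<Rightarrow> real \<Rightarrow> real \<Rightarrow> real" where
  "C5 r \<mu> \<sigma> \<beta> lam h =
    (let \<kappa> = kappa r \<mu> \<sigma>; r1 = root1 r \<kappa>; r2 = root2 r \<kappa> in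
     (1 - r2) * \<kappa>^2 / (2 * (r1 - r2) * \<beta> * r^2) *
     (exp ((lam - 1) * (1 - r1) * \<beta> * h) - exp (lam * (1 - r1) * \<beta> * h)))"

definition x_splg :: "real \<Rightarrow> real \<Rightarrow> real \<Rightarrow> real \<Rightarrow> real \<Rightarrow> real \<Rightarrow> real" where
  "x_splg r \<mu> \<sigma> \<beta> lam h =
    (let \<kappa> = kappa r \<mu> \<sigma>; r1 = root1 r \<kappa>; r2 = root2 r \<kappa> in
     - r1 * C5 r \<mu> \<sigma> \<beta> lam h * (1 - lam) powr (r1 - 1) * exp ((lam - 1) * (r1 - 1) * \<beta> * h)
     - r2 * C6 r \<mu> \<sigma> \<beta> lam h * (1 - lam) powr (r2 - 1) * exp ((lam - 1) * (r2 - 1) * \<beta> * h)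
     + h / r)"

text \<open>Optimal feedback consumption evaluated on the boundary curve: c*(x_splg(h),h) = h.\<close>
definition c_star_splg :: "real \<Rightarrow> real" where
  "c_star_splg h = h"

definition pi_star_splg :: "real \<Rightarrow> real \<Rightarrow> real \<Rightarrow> real \<Rightarrow> real \<Rightarrow> real \<Rightarrow> real" where
  "pi_star_splg r \<mu> \<sigma> \<beta> lam h =
    (let \<kappa> = kappa r \<mu> \<sigma>; r1 = root1 r \<kappa>; r2 = root2 r \<kappa>;
         y = (1 - lam) * exp ((lam - 1) * \<beta> * h) in
     (\<mu> - r) / \<sigma>^2 *
     (2 * r / \<kappa>^2 * C5 r \<mu> \<sigma> \<beta> lam h * y powr (r1 - 1)
      + 2 * r / \<kappa>^2 * C6 r \<mu> \<sigma> \<beta> lam h * y powr (r2 - 1)))"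

end

theory Submission
  imports Defs "HOL-Real_Asymp.Real_Asymp"
begin

text \<open>Multiplied by the exponential factors with which they enter x_splg and \<pi>*, the
coefficients C5(h) and C6(h) become constants plus multiples of e^{-(r1-1)\<beta>h}, which
decays because r1 > 1. Hence x_splg(h) = h/r + O(1), so h / x_splg(h) \<rightarrow> r, and \<pi>* tends
to an explicit constant, which the Vieta relations r1 + r2 = 1, r1 r2 = -2r/\<kappa>^2 of the
characteristic equation \<kappa>^2 z (z - 1) / 2 = r reduce to the stated value.\<close>

lemma root1_plus_root2: "root1 r \<kappa> + root2 r \<kappa> = 1"
  by (simp add: root1_def root2_def field_simps)

lemma root1_times_root2:
  assumes "r \<ge> 0" "\<kappa> \<noteq> 0"
  shows "root1 r \<kappa> * root2 r \<kappa> = - 2 * r / \<kappa>\<^sup>2"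
proof -
  have "sqrt (1 + 8 * r / \<kappa>\<^sup>2) ^ 2 = 1 + 8 * r / \<kappa>\<^sup>2"
    using assms by simp
  then show ?thesis
    by (simp add: root1_def root2_def field_simps power2_eq_square)
qed

lemma root1_gt_one:
  assumes "r > 0" "\<kappa> \<noteq> 0"
  shows "root1 r \<kappa> > 1"
proof -
  have "1 < sqrt (1 + 8 * r / \<kappa>\<^sup>2)"
    using assms by (simp add: real_less_rsqrt)
  then show ?thesis by (simp add: root1_def)
qed

lemma tendsto_ratio_linear_plus_transient:
  fixes r g a b :: real
  assumes "r > 0" "g > 0"
  shows "((\<lambda>h. h / (h / r + a + b * exp (- g * h))) \<longlongrightarrow> r) at_top"
  using assms by real_asymp

lemma tendsto_constant_plus_transient:
  fixes g c b :: real
  assumes "g > 0"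
  shows "((\<lambda>h. c + b * exp (- g * h)) \<longlongrightarrow> c) at_top"
  using assms by real_asymp

locale splg_parameters =
  fixes r \<mu> \<sigma> \<beta> lam :: real
begin

abbreviation "r1 \<equiv> root1 r (kappa r \<mu> \<sigma>)"
abbreviation "r2 \<equiv> root2 r (kappa r \<mu> \<sigma>)"

lemma C5_scaled:
  "C5 r \<mu> \<sigma> \<beta> lam h * exp ((lam - 1) * (r1 - 1) * \<beta> * h) =
     (1 - r2) * (kappa r \<mu> \<sigma>)\<^sup>2 / (2 * (r1 - r2) * \<beta> * r\<^sup>2) * (1 - exp (- ((r1 - 1) * \<beta>) * h))"
  (is "_ * ?E = ?K * _")
proof -
  have "C5 r \<mu> \<sigma> \<beta> lam h =
      ?K * (exp ((lam - 1) * (1 - r1) * \<beta> * h) - exp (lam * (1 - r1) * \<beta> * h))"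
    by (simp add: C5_def Let_def)
  moreover have "exp ((lam - 1) * (1 - r1) * \<beta> * h) * ?E = 1"
    by (simp add: exp_add [symmetric] algebra_simps)
  moreover have "exp (lam * (1 - r1) * \<beta> * h) * ?E = exp (- ((r1 - 1) * \<beta>) * h)"
    by (simp add: exp_add [symmetric] algebra_simps)
  ultimately show ?thesis
    by (simp add: left_diff_distrib mult.assoc)
qed

lemma C6_scaled:
  "C6 r \<mu> \<sigma> \<beta> lam h * exp ((lam - 1) * (r2 - 1) * \<beta> * h) =
     (1 - lam) powr (r1 - r2) / ((r1 - r2) * \<beta> * r) *
     (1 / (1 - r2) - lam / (lam * (1 - r2) - (r1 - r2)) * exp (- ((r1 - 1) * \<beta>) * h))"
  (is "_ * ?E = ?K * (?a - ?b * _)")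
proof -
  have "C6 r \<mu> \<sigma> \<beta> lam h =
      ?K * (?a * exp ((lam - 1) * (1 - r2) * \<beta> * h)
            - ?b * exp ((lam * (1 - r2) - (r1 - r2)) * \<beta> * h))"
    by (simp add: C6_def Let_def)
  moreover have "exp ((lam - 1) * (1 - r2) * \<beta> * h) * ?E = 1"
    by (simp add: exp_add [symmetric] algebra_simps)
  moreover have "exp ((lam * (1 - r2) - (r1 - r2)) * \<beta> * h) * ?E = exp (- ((r1 - 1) * \<beta>) * h)"
    by (simp add: exp_add [symmetric] algebra_simps)
  ultimately show ?thesis
    by (simp add: left_diff_distrib mult.assoc)
qed

lemma x_splg_scaled:
  "x_splg r \<mu> \<sigma> \<beta> lam h = h / r
     - r1 * (1 - lam) powr (r1 - 1) * (C5 r \<mu> \<sigma> \<beta> lam h * exp ((lam - 1) * (r1 - 1) * \<beta> * h))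
     - r2 * (1 - lam) powr (r2 - 1) * (C6 r \<mu> \<sigma> \<beta> lam h * exp ((lam - 1) * (r2 - 1) * \<beta> * h))"
  by (simp add: x_splg_def Let_def algebra_simps)

lemma x_splg_linear_plus_transient:
  obtains a b where "\<And>h. x_splg r \<mu> \<sigma> \<beta> lam h = h / r + a + b * exp (- ((r1 - 1) * \<beta>) * h)"
proof -
  define e where "e h = exp (- ((r1 - 1) * \<beta>) * h)" for h
  define p1 p2 where "p1 = r1 * (1 - lam) powr (r1 - 1)" and "p2 = r2 * (1 - lam) powr (r2 - 1)"
  define K5 where "K5 = (1 - r2) * (kappa r \<mu> \<sigma>)\<^sup>2 / (2 * (r1 - r2) * \<beta> * r\<^sup>2)"
  define K6 where "K6 = (1 - lam) powr (r1 - r2) / ((r1 - r2) * \<beta> * r)"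
  define c d where "c = 1 / (1 - r2)" and "d = lam / (lam * (1 - r2) - (r1 - r2))"
  have "x_splg r \<mu> \<sigma> \<beta> lam h = h / r - p1 * (K5 * (1 - e h)) - p2 * (K6 * (c - d * e h))" for h
    unfolding x_splg_scaled C5_scaled C6_scaled e_def p1_def p2_def K5_def K6_def c_def d_def
    by (simp add: mult.assoc)
  then show ?thesis
    by (intro that[of "- p1 * K5 - p2 * K6 * c" "p1 * K5 + p2 * K6 * d"]) (simp add: e_def algebra_simps)
qed

lemma pi_star_splg_scaled:
  "pi_star_splg r \<mu> \<sigma> \<beta> lam h = (\<mu> - r) / \<sigma>\<^sup>2 * (2 * r / (kappa r \<mu> \<sigma>)\<^sup>2) *
     ((1 - lam) powr (r1 - 1) * (C5 r \<mu> \<sigma> \<beta> lam h * exp ((lam - 1) * (r1 - 1) * \<beta> * h))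
      + (1 - lam) powr (r2 - 1) * (C6 r \<mu> \<sigma> \<beta> lam h * exp ((lam - 1) * (r2 - 1) * \<beta> * h)))"
proof -
  have "((1 - lam) * exp ((lam - 1) * \<beta> * h)) powr (z - 1) =
      (1 - lam) powr (z - 1) * exp ((lam - 1) * (z - 1) * \<beta> * h)" for z
    by (simp only: powr_mult exp_powr_real) (simp add: algebra_simps)
  then show ?thesis
    by (simp add: pi_star_splg_def Let_def algebra_simps)
qed

lemma limit_portfolio_coefficient:
  assumes "r > 0" "\<beta> > 0" "kappa r \<mu> \<sigma> \<noteq> 0"
  shows "2 * r / (kappa r \<mu> \<sigma>)\<^sup>2 *
      ((1 - lam) powr (r1 - 1) * ((1 - r2) * (kappa r \<mu> \<sigma>)\<^sup>2 / (2 * (r1 - r2) * \<beta> * r\<^sup>2))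
       + (1 - lam) powr (r2 - 1) * ((1 - lam) powr (r1 - r2) / ((r1 - r2) * \<beta> * r)) / (1 - r2))
    = (1 - lam) powr (r1 - 1) / (r * \<beta>)"
proof -
  have sum: "1 - r2 = r1"
    using root1_plus_root2 by (metis add_diff_cancel_right')
  have prod: "2 * r / (kappa r \<mu> \<sigma>)\<^sup>2 = - r1 * r2"
    using root1_times_root2 assms by simp
  have "r1 > 1"
    using root1_gt_one assms by simp
  then have "r1 \<noteq> 0" and gap: "r1 - r2 > 0"
    using sum by auto
  define d where "d = r1 - r2"
  have powers: "(1 - lam) powr (r2 - 1) * ((1 - lam) powr d / (d * \<beta> * r))
      = (1 - lam) powr (r1 - 1) / (d * \<beta> * r)"
    by (simp add: d_def powr_add [symmetric])
  have "2 * r / (kappa r \<mu> \<sigma>)\<^sup>2 *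
      ((1 - lam) powr (r1 - 1) * (r1 * (kappa r \<mu> \<sigma>)\<^sup>2 / (2 * d * \<beta> * r\<^sup>2))
       + (1 - lam) powr (r2 - 1) * ((1 - lam) powr d / (d * \<beta> * r)) / r1)
    = (1 - lam) powr (r1 - 1) / (d * \<beta> * r) * (r1 + 2 * r / (kappa r \<mu> \<sigma>)\<^sup>2 / r1)"
    unfolding powers using assms \<open>r1 \<noteq> 0\<close> gap by (simp add: d_def[symmetric] field_simps power2_eq_square)
  also have "r1 + 2 * r / (kappa r \<mu> \<sigma>)\<^sup>2 / r1 = d"
    unfolding prod d_def using \<open>r1 \<noteq> 0\<close> by (simp add: field_simps)
  finally show ?thesis
    using gap by (simp add: sum d_def)
qed

lemma pi_star_splg_constant_plus_transient:
  assumes "r > 0" "\<beta> > 0" "kappa r \<mu> \<sigma> \<noteq> 0"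
  obtains b where "\<And>h. pi_star_splg r \<mu> \<sigma> \<beta> lam h =
    (\<mu> - r) * (1 - lam) powr (r1 - 1) / (r * \<beta> * \<sigma>\<^sup>2) + b * exp (- ((r1 - 1) * \<beta>) * h)"
proof -
  define e where "e h = exp (- ((r1 - 1) * \<beta>) * h)" for h
  define M where "M = (\<mu> - r) / \<sigma>\<^sup>2 * (2 * r / (kappa r \<mu> \<sigma>)\<^sup>2)"
  define p1 p2 where "p1 = (1 - lam) powr (r1 - 1)" and "p2 = (1 - lam) powr (r2 - 1)"
  define K5 where "K5 = (1 - r2) * (kappa r \<mu> \<sigma>)\<^sup>2 / (2 * (r1 - r2) * \<beta> * r\<^sup>2)"
  define K6 where "K6 = (1 - lam) powr (r1 - r2) / ((r1 - r2) * \<beta> * r)"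
  define d where "d = lam / (lam * (1 - r2) - (r1 - r2))"
  have pi_eq: "pi_star_splg r \<mu> \<sigma> \<beta> lam h = M * (p1 * (K5 * (1 - e h)) + p2 * (K6 * (1 / (1 - r2) - d * e h)))"
    for h
    unfolding pi_star_splg_scaled C5_scaled C6_scaled e_def M_def p1_def p2_def K5_def K6_def d_def ..
  have "M * (p1 * K5 + p2 * K6 / (1 - r2)) = (\<mu> - r) / \<sigma>\<^sup>2 * (p1 / (r * \<beta>))"
    using limit_portfolio_coefficient[OF assms]
    unfolding M_def p1_def p2_def K5_def K6_def by (simp only: mult.assoc)
  also have "\<dots> = (\<mu> - r) * (1 - lam) powr (r1 - 1) / (r * \<beta> * \<sigma>\<^sup>2)"
    by (simp add: p1_def)
  finally have limit: "M * (p1 * K5 + p2 * K6 / (1 - r2)) =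
      (\<mu> - r) * (1 - lam) powr (r1 - 1) / (r * \<beta> * \<sigma>\<^sup>2)" .
  have "pi_star_splg r \<mu> \<sigma> \<beta> lam h =
      M * (p1 * K5 + p2 * K6 / (1 - r2)) + - M * (p1 * K5 + p2 * K6 * d) * e h" for h
    unfolding pi_eq by (simp add: algebra_simps)
  then show ?thesis
    unfolding limit e_def by (rule that)
qed

end

theorem corollary3p2:
  fixes r \<mu> \<sigma> \<beta> lam :: real
  assumes "r > 0" and "\<mu> > r" and "\<sigma> > 0" and "\<beta> > 0" and "0 < lam" and "lam < 1"
  shows "((\<lambda>h. c_star_splg h / x_splg r \<mu> \<sigma> \<beta> lam h) \<longlongrightarrow> r) at_top \<and>
         ((\<lambda>h. pi_star_splg r \<mu> \<sigma> \<beta> lam h) \<longlongrightarrow>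
           (\<mu> - r) * (1 - lam) powr (root1 r (kappa r \<mu> \<sigma>) - 1) / (r * \<beta> * \<sigma>^2)) at_top"
proof -
  interpret splg_parameters r \<mu> \<sigma> \<beta> lam .
  have kappa_pos: "kappa r \<mu> \<sigma> > 0"
    using assms by (simp add: kappa_def)
  then have "r1 > 1"
    using root1_gt_one assms by simp
  then have decay: "(r1 - 1) * \<beta> > 0"
    using assms by simp
  obtain a b where x: "\<And>h. x_splg r \<mu> \<sigma> \<beta> lam h =
      h / r + a + b * exp (- ((r1 - 1) * \<beta>) * h)"
    using x_splg_linear_plus_transient by blast
  obtain b' where pi: "\<And>h. pi_star_splg r \<mu> \<sigma> \<beta> lam h =
      (\<mu> - r) * (1 - lam) powr (r1 - 1) / (r * \<beta> * \<sigma>\<^sup>2)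
      + b' * exp (- ((r1 - 1) * \<beta>) * h)"
    using pi_star_splg_constant_plus_transient \<open>r > 0\<close> \<open>\<beta> > 0\<close> kappa_pos by force
  show ?thesis
    unfolding c_star_splg_def x pi
    using tendsto_ratio_linear_plus_transient[OF \<open>r > 0\<close> decay]
      tendsto_constant_plus_transient[OF decay] by simp
qed

end
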